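(* Let $X_1,X_2,\dots$ be independent normally distributed random variables with $\mathbb{E}[X_i]=\mu_i$ and $\mathbb{E}[|X_i-\mu_i|^2]=\nu_i>0$ for $i\in\mathbb{N}$. Define $S_n=\sum_{i=1}^nX_i$, $\overline{\mu}_n=\frac1n\sum_{i=1}^n\mu_i$, $\overline{\nu}_n=\frac1n\sum_{i=1}^n\nu_i$, and $\mathcal{V}(s,n)=n\big(\overline{\mu}_ns+\frac{\overline{\nu}_ns^2}{2}\big)$ for $s\in\mathbb{R}$, $n\in\mathbb{N}$. Then for every positive integer $m$ and all $\theta\in\mathbb{R}$, \[ \Pr\Big\{\sup_{n\in\mathbb{N}}\big[\zeta(S_n-m\theta)-\mathcal{V}(\zeta,n)+\mathcal{V}(\zeta,m)\big]\ge0\Big\}\le\Big[\exp\Big(-\frac{|\theta-\overline{\mu}_m|^2}{2\overline{\nu}_m}\Big)\Big]^m, \] where $\zeta=\frac{\theta-\overline{\mu}_m}{\overline{\nu}_m}$.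
   Context: $\mathbb{N}$ denotes the set of positive integers. *)

theory Defs
  imports "HOL-Probability.Probability"
begin

definition mean_bar :: "(nat \<Rightarrow> real) \<Rightarrow> nat \<Rightarrow> real" where
  "mean_bar a n = (\<Sum>i=1..n. a i) / real n"

definition calV :: "(nat \<Rightarrow> real) \<Rightarrow> (nat \<Rightarrow> real) \<Rightarrow> real \<Rightarrow> nat \<Rightarrow> real" where
  "calV \<mu> \<nu> s n = real n * (mean_bar \<mu> n * s + mean_bar \<nu> n * s^2 / 2)"

end

theory Submission
  imports Defs
begin

text \<open>
  For fixed \<open>\<zeta>\<close>, \<open>exp (\<zeta> S\<^sub>n - calV \<zeta> n)\<close> is the product of the independent factors
  \<open>exp (\<zeta> X\<^sub>i - \<zeta> \<mu>\<^sub>i - \<zeta>\<^sup>2 \<nu>\<^sub>i / 2)\<close>, each of mean 1 by the Gaussian moment generating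
  function, so it is a nonnegative martingale \<open>L\<^sub>n\<close>.  Ville's maximal inequality
  \<open>P (sup\<^sub>n L\<^sub>n \<ge> c) \<le> 1 / c\<close> with \<open>c = exp (\<zeta> m \<theta> - calV \<zeta> m)\<close> bounds the probability by
  \<open>exp (calV \<zeta> m - \<zeta> m \<theta>)\<close>, which for this \<open>\<zeta>\<close> is the right-hand side.
  Ville's inequality up to a horizon \<open>N\<close> follows by splitting according to the first passage
  time \<open>\<tau>\<close> of \<open>L\<close> above \<open>c\<close>: \<open>L\<^sub>\<tau> \<ge> c\<close>, and by independence of the later factors
  \<open>E[L\<^sub>n; \<tau> = n] = E[L\<^sub>N; \<tau> = n]\<close>, so \<open>c P(\<tau> \<le> N) \<le> E[L\<^sub>N] = 1\<close>.  Then let \<open>N \<rightarrow> \<infinity>\<close>.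
\<close>

lemma normal_density_exp_tilt:
  assumes "\<sigma> > 0"
  shows "normal_density \<mu> \<sigma> x * exp (z * x - z * \<mu> - z\<^sup>2 * \<sigma>\<^sup>2 / 2)
    = normal_density (\<mu> + z * \<sigma>\<^sup>2) \<sigma> x"
proof -
  have "- (x - \<mu>)\<^sup>2 / (2 * \<sigma>\<^sup>2) + (z * x - z * \<mu> - z\<^sup>2 * \<sigma>\<^sup>2 / 2)
      = - (x - (\<mu> + z * \<sigma>\<^sup>2))\<^sup>2 / (2 * \<sigma>\<^sup>2)"
    using assms by (simp add: field_simps power2_eq_square)
  then show ?thesis
    unfolding normal_density_def by (metis exp_add mult.assoc)
qed

lemma nn_integral_exp_tilt_normal:
  assumes "distributed M lborel X (normal_density \<mu> (sqrt \<nu>))" and "\<nu> > 0"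
  shows "(\<integral>\<^sup>+\<omega>. ennreal (exp (z * X \<omega> - z * \<mu> - z\<^sup>2 * \<nu> / 2)) \<partial>M) = 1"
proof -
  have "(\<integral>\<^sup>+\<omega>. ennreal (exp (z * X \<omega> - z * \<mu> - z\<^sup>2 * \<nu> / 2)) \<partial>M)
      = (\<integral>\<^sup>+x. ennreal (normal_density \<mu> (sqrt \<nu>) x)
                 * ennreal (exp (z * x - z * \<mu> - z\<^sup>2 * \<nu> / 2)) \<partial>lborel)"
    by (rule distributed_nn_integral[OF assms(1), symmetric]) measurable
  also have "\<dots> = (\<integral>\<^sup>+x. ennreal (normal_density (\<mu> + z * \<nu>) (sqrt \<nu>) x) \<partial>lborel)"
    using normal_density_exp_tilt[of "sqrt \<nu>" \<mu> _ z] assms(2)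
    by (intro nn_integral_cong) (simp add: ennreal_mult'[symmetric])
  also have "\<dots> = 1"
    using assms(2) by (subst nn_integral_eq_integral)
      (auto intro!: integrable_normal_density integral_normal_density)
  finally show ?thesis .
qed

lemma calV_eq_sum:
  "calV \<mu> \<nu> s n = s * (\<Sum>i=1..n. \<mu> i) + s\<^sup>2 * (\<Sum>i=1..n. \<nu> i) / 2"
  by (cases "n = 0") (simp_all add: calV_def mean_bar_def field_simps)

lemma mean_bar_pos:
  assumes "\<And>i. i \<in> {1..n} \<Longrightarrow> 0 < a i" and "1 \<le> n"
  shows "0 < mean_bar a n"
  unfolding mean_bar_def using assms by (intro divide_pos_pos sum_pos) auto

lemma SUP_ereal_diff_nonneg_iff:
  assumes "I \<noteq> {}"
  shows "0 \<le> (SUP i\<in>I. ereal (f i - t)) \<longleftrightarrow> ereal t \<le> (SUP i\<in>I. ereal (f i))"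
proof -
  have "(SUP i\<in>I. ereal (f i - t)) = (SUP i\<in>I. ereal (f i)) - ereal t"
    using SUP_ereal_minus_left[OF assms, of "ereal t" "\<lambda>i. ereal (f i)"] by simp
  then show ?thesis
    by (simp add: ereal_le_minus)
qed

definition first_passage :: "'b::linorder \<Rightarrow> (nat \<Rightarrow> 'b) \<Rightarrow> nat \<Rightarrow> bool" where
  "first_passage c v n \<longleftrightarrow> c \<le> v n \<and> (\<forall>k\<in>{1..<n}. v k < c)"

lemma first_passage_unique:
  assumes "first_passage c v n" "first_passage c v n'" "1 \<le> n" "1 \<le> n'"
  shows "n = n'"
  using assms unfolding first_passage_def
  by (metis atLeastLessThan_iff linorder_neqE_nat not_le)

lemma first_passage_exists:
  assumes "c \<le> v n" "1 \<le> n"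
  obtains n' where "n' \<in> {1..n}" "first_passage c v n'"
proof -
  define n' where "n' = (LEAST n. 1 \<le> n \<and> c \<le> v n)"
  have "1 \<le> n'" "c \<le> v n'" "n' \<le> n"
    using LeastI[of "\<lambda>n. 1 \<le> n \<and> c \<le> v n"] Least_le[of "\<lambda>n. 1 \<le> n \<and> c \<le> v n"] assms
    unfolding n'_def by auto
  moreover have "v k < c" if "k \<in> {1..<n'}" for k
    using not_less_Least[of k "\<lambda>n. 1 \<le> n \<and> c \<le> v n"] that unfolding n'_def by auto
  ultimately show ?thesis
    using that unfolding first_passage_def by auto
qed

lemma sum_of_bool_first_passage:
  "(\<Sum>n\<in>{1..N}. of_bool (first_passage c v n) :: 'a::semiring_1)
    = of_bool (\<exists>n\<in>{1..N}. c \<le> v n)"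
proof (cases "\<exists>n\<in>{1..N}. c \<le> v n")
  case True
  then obtain n where n: "n \<in> {1..N}" "first_passage c v n"
    by (metis atLeastAtMost_iff first_passage_exists order_trans)
  then have "(\<Sum>k\<in>{1..N}. of_bool (first_passage c v k) :: 'a) = (\<Sum>k\<in>{1..N}. of_bool (k = n))"
    by (intro sum.cong refl) (auto intro: first_passage_unique)
  with n True show ?thesis by simp
qed (auto simp: first_passage_def)

lemma of_bool_ex_le_sum_first_passage:
  fixes v :: "nat \<Rightarrow> real"
  assumes "0 \<le> c"
  shows "c * of_bool (\<exists>n\<in>{1..N}. c \<le> v n) \<le> (\<Sum>n\<in>{1..N}. of_bool (first_passage c v n) * v n)"
proof -
  have "c * of_bool (\<exists>n\<in>{1..N}. c \<le> v n) = (\<Sum>n\<in>{1..N}. of_bool (first_passage c v n)) * c"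
    by (simp only: sum_of_bool_first_passage mult.commute)
  also have "\<dots> = (\<Sum>n\<in>{1..N}. of_bool (first_passage c v n) * c)"
    by (rule sum_distrib_right)
  also have "\<dots> \<le> (\<Sum>n\<in>{1..N}. of_bool (first_passage c v n) * v n)"
    by (intro sum_mono) (simp add: first_passage_def)
  finally show ?thesis .
qed

locale product_martingale = prob_space M for M :: "'a measure" +
  fixes X :: "nat \<Rightarrow> 'a \<Rightarrow> real" and y :: "nat \<Rightarrow> real \<Rightarrow> real"
  assumes indep: "indep_vars (\<lambda>_. borel) X {1..}"
    and y_measurable[measurable]: "\<And>i. y i \<in> borel_measurable borel"
    and y_nonneg: "\<And>i x. 0 \<le> y i x"
    and nn_integral_y: "\<And>i. 1 \<le> i \<Longrightarrow> (\<integral>\<^sup>+\<omega>. ennreal (y i (X i \<omega>)) \<partial>M) = 1"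
begin

lemma X_measurable: "1 \<le> i \<Longrightarrow> X i \<in> borel_measurable M"
  using indep unfolding indep_vars_def by auto

lemma prod_y_measurable[measurable]:
  "(\<lambda>\<omega>. \<Prod>i\<in>I. y i (X i \<omega>)) \<in> borel_measurable M" if "I \<subseteq> {1..}"
  using that by (intro borel_measurable_prod measurable_compose[OF X_measurable y_measurable]) auto

lemma prod_y_measurable_PiM:
  "(\<lambda>v. \<Prod>i=1..k. y i (v i)) \<in> borel_measurable (PiM {1..n} (\<lambda>_. borel))" if "k \<le> n"
proof (rule borel_measurable_prod)
  fix i assume "i \<in> {1..k}"
  with that have "i \<in> {1..n}" by auto
  then show "(\<lambda>v. y i (v i)) \<in> borel_measurable (PiM {1..n} (\<lambda>_. borel))"
    by measurable
qed

lemma nn_integral_mult_prod_tail: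
  assumes G: "G \<in> borel_measurable (PiM {1..n} (\<lambda>_. borel))" "\<And>v. 0 \<le> G v" and "n \<le> N"
  shows "(\<integral>\<^sup>+\<omega>. ennreal (G (restrict (\<lambda>i. X i \<omega>) {1..n}) * (\<Prod>i\<in>{n<..N}. y i (X i \<omega>))) \<partial>M)
    = (\<integral>\<^sup>+\<omega>. ennreal (G (restrict (\<lambda>i. X i \<omega>) {1..n})) \<partial>M)"
proof -
  \<comment> \<open>Index \<open>n\<close> stands for the block \<open>X\<^sub>1, \<dots>, X\<^sub>n\<close>, each index \<open>j > n\<close> for \<open>X\<^sub>j\<close> alone.\<close>
  define K where "K j = (if j = n then {1..n} else {j})" for j
  define H where "H j = (if j = n then G else (\<lambda>v. y j (v j)))" for j
  define Z where "Z j \<omega> = H j (restrict (\<lambda>i. X i \<omega>) (K j))" for j \<omega>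
  have "indep_vars (\<lambda>j. PiM (K j) (\<lambda>_. borel)) (\<lambda>j \<omega>. restrict (\<lambda>i. X i \<omega>) (K j)) {n..N}"
    by (rule indep_vars_restrict[OF indep]) (auto simp: K_def disjoint_family_on_def)
  then have "indep_vars (\<lambda>_. borel) Z {n..N}"
    unfolding Z_def
  proof (rule indep_vars_compose2)
    fix j
    show "H j \<in> borel_measurable (PiM (K j) (\<lambda>_. borel))"
      using G(1) by (cases "j = n") (simp_all add: H_def K_def)
  qed
  then have "indep_vars (\<lambda>_. borel) (\<lambda>j \<omega>. ennreal (Z j \<omega>)) {n..N}"
    by (rule indep_vars_compose2) measurable
  moreover have "0 \<le> Z j \<omega>" for j \<omega>
    by (simp add: Z_def H_def G y_nonneg)
  ultimately have "(\<integral>\<^sup>+\<omega>. ennreal (\<Prod>j\<in>{n..N}. Z j \<omega>) \<partial>M) = (\<Prod>j\<in>{n..N}. \<integral>\<^sup>+\<omega>. ennreal (Z j \<omega>) \<partial>M)"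
    using indep_vars_nn_integral[of "{n..N}" "\<lambda>j \<omega>. ennreal (Z j \<omega>)"] by (simp add: prod_ennreal)
  also have "\<dots> = (\<integral>\<^sup>+\<omega>. ennreal (Z n \<omega>) \<partial>M) * (\<Prod>j\<in>{n<..N}. \<integral>\<^sup>+\<omega>. ennreal (Z j \<omega>) \<partial>M)"
    using \<open>n \<le> N\<close> by (subst prod.head) auto
  also have "(\<Prod>j\<in>{n<..N}. \<integral>\<^sup>+\<omega>. ennreal (Z j \<omega>) \<partial>M) = 1"
    by (intro prod.neutral) (auto simp: Z_def H_def K_def nn_integral_y)
  also have "(\<lambda>\<omega>. \<Prod>j\<in>{n..N}. Z j \<omega>)
      = (\<lambda>\<omega>. G (restrict (\<lambda>i. X i \<omega>) {1..n}) * (\<Prod>i\<in>{n<..N}. y i (X i \<omega>)))"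
    using \<open>n \<le> N\<close> by (auto simp: prod.head Z_def H_def K_def intro!: prod.cong)
  finally show ?thesis
    by (simp add: Z_def H_def K_def)
qed

lemma nn_integral_prod_y: "(\<integral>\<^sup>+\<omega>. ennreal (\<Prod>i=1..N. y i (X i \<omega>)) \<partial>M) = 1"
  using nn_integral_mult_prod_tail[of "\<lambda>_. 1" 0 N]
  by (simp add: atLeastSucAtMost_greaterThanAtMost[symmetric] emeasure_space_1)

definition first_passage_value :: "real \<Rightarrow> nat \<Rightarrow> (nat \<Rightarrow> real) \<Rightarrow> real" where
  "first_passage_value c n v =
    of_bool (first_passage c (\<lambda>k. \<Prod>i=1..k. y i (v i)) n) * (\<Prod>i=1..n. y i (v i))"

lemma first_passage_value_nonneg: "0 \<le> first_passage_value c n v"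
  unfolding first_passage_value_def by (simp add: prod_nonneg y_nonneg)

lemma first_passage_value_measurable:
  "first_passage_value c n \<in> borel_measurable (PiM {1..n} (\<lambda>_. borel))"
proof -
  have [measurable]: "(\<lambda>v. \<Prod>i=1..k. y i (v i)) \<in> borel_measurable (PiM {1..n} (\<lambda>_. borel))"
    if "k \<le> n" for k
    using that by (rule prod_y_measurable_PiM)
  show ?thesis
    unfolding first_passage_value_def first_passage_def by measurable
qed

lemma first_passage_value_restrict:
  "first_passage_value c n (restrict v {1..n}) = first_passage_value c n v"
proof -
  have "(\<Prod>i=1..k. y i (restrict v {1..n} i)) = (\<Prod>i=1..k. y i (v i))" if "k \<le> n" for k
    using that by (intro prod.cong) auto
  then show ?thesis
    unfolding first_passage_value_def first_passage_def by simp
qed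

lemma first_passage_value_X_measurable[measurable]:
  "(\<lambda>\<omega>. first_passage_value c n (\<lambda>i. X i \<omega>)) \<in> borel_measurable M"
proof -
  have "(\<lambda>\<omega>. first_passage_value c n (restrict (\<lambda>i. X i \<omega>) {1..n})) \<in> borel_measurable M"
    by (intro measurable_compose[OF measurable_restrict first_passage_value_measurable] X_measurable) auto
  then show ?thesis
    by (simp only: first_passage_value_restrict)
qed

lemma sum_nn_integral_first_passage_value_le:
  "(\<Sum>n\<in>{1..N}. \<integral>\<^sup>+\<omega>. ennreal (first_passage_value c n (\<lambda>i. X i \<omega>)) \<partial>M) \<le> 1"
proof -
  define tail where "tail n \<omega> = (\<Prod>i\<in>{n<..N}. y i (X i \<omega>))" for n \<omega>
  have tail_nonneg: "0 \<le> tail n \<omega>" for n \<omega>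
    unfolding tail_def by (simp add: prod_nonneg y_nonneg)
  have [measurable]: "tail n \<in> borel_measurable M" for n
    unfolding tail_def by measurable auto
  have upper: "(\<Sum>n\<in>{1..N}. first_passage_value c n (\<lambda>i. X i \<omega>) * tail n \<omega>)
      \<le> (\<Prod>i=1..N. y i (X i \<omega>))" for \<omega>
  proof -
    have "(\<Prod>i=1..n. y i (X i \<omega>)) * tail n \<omega> = (\<Prod>i=1..N. y i (X i \<omega>))" if "n \<le> N" for n
    proof -
      have "{1..N} = {1..n} \<union> {n<..N}" using that by auto
      then show ?thesis
        unfolding tail_def by (simp add: prod.union_disjoint[symmetric] ivl_disj_int)
    qed
    then have "(\<Sum>n\<in>{1..N}. first_passage_value c n (\<lambda>i. X i \<omega>) * tail n \<omega>)
        = (\<Sum>n\<in>{1..N}. of_bool (first_passage c (\<lambda>k. \<Prod>i=1..k. y i (X i \<omega>)) n))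
            * (\<Prod>i=1..N. y i (X i \<omega>))"
      unfolding sum_distrib_right by (intro sum.cong refl) (simp add: first_passage_value_def mult.assoc)
    also have "\<dots> \<le> (\<Prod>i=1..N. y i (X i \<omega>))"
      unfolding sum_of_bool_first_passage by (simp add: prod_nonneg y_nonneg)
    finally show ?thesis .
  qed
  have "(\<Sum>n\<in>{1..N}. \<integral>\<^sup>+\<omega>. ennreal (first_passage_value c n (\<lambda>i. X i \<omega>)) \<partial>M)
      = (\<Sum>n\<in>{1..N}. \<integral>\<^sup>+\<omega>. ennreal (first_passage_value c n (\<lambda>i. X i \<omega>) * tail n \<omega>) \<partial>M)"
    using nn_integral_mult_prod_tail[OF first_passage_value_measurable first_passage_value_nonneg,
        unfolded first_passage_value_restrict]
    by (intro sum.cong refl) (simp add: tail_def)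
  also have "\<dots> = (\<integral>\<^sup>+\<omega>. ennreal (\<Sum>n\<in>{1..N}. first_passage_value c n (\<lambda>i. X i \<omega>) * tail n \<omega>) \<partial>M)"
    by (simp add: first_passage_value_nonneg tail_nonneg nn_integral_sum flip: sum_ennreal)
  also have "\<dots> \<le> (\<integral>\<^sup>+\<omega>. ennreal (\<Prod>i=1..N. y i (X i \<omega>)) \<partial>M)"
    using upper by (intro nn_integral_mono ennreal_leI)
  also have "\<dots> = 1"
    by (rule nn_integral_prod_y)
  finally show ?thesis .
qed

lemma maximal_inequality_finite:
  assumes "0 < c"
  shows "measure M {\<omega>\<in>space M. \<exists>n\<in>{1..N}. c \<le> (\<Prod>i=1..n. y i (X i \<omega>))} \<le> 1 / c"
proof -
  define B where "B = {\<omega>\<in>space M. \<exists>n\<in>{1..N}. c \<le> (\<Prod>i=1..n. y i (X i \<omega>))}"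
  have lower: "c * indicator B \<omega> \<le> (\<Sum>n\<in>{1..N}. first_passage_value c n (\<lambda>i. X i \<omega>))" for \<omega>
  proof -
    have "c * indicator B \<omega> \<le> c * of_bool (\<exists>n\<in>{1..N}. c \<le> (\<Prod>i=1..n. y i (X i \<omega>)))"
      using assms by (simp add: B_def indicator_def)
    also have "\<dots> \<le> (\<Sum>n\<in>{1..N}. first_passage_value c n (\<lambda>i. X i \<omega>))"
      unfolding first_passage_value_def using assms by (intro of_bool_ex_le_sum_first_passage) simp
    finally show ?thesis .
  qed
  have "ennreal c * emeasure M B = (\<integral>\<^sup>+\<omega>. ennreal c * indicator B \<omega> \<partial>M)"
    by (rule nn_integral_cmult_indicator[symmetric]) (unfold B_def, measurable)
  also have "\<dots> \<le> (\<integral>\<^sup>+\<omega>. ennreal (\<Sum>n\<in>{1..N}. first_passage_value c n (\<lambda>i. X i \<omega>)) \<partial>M)"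
    using lower assms
    by (intro nn_integral_mono) (simp add: ennreal_leI flip: ennreal_indicator ennreal_mult')
  also have "\<dots> = (\<Sum>n\<in>{1..N}. \<integral>\<^sup>+\<omega>. ennreal (first_passage_value c n (\<lambda>i. X i \<omega>)) \<partial>M)"
    by (simp add: first_passage_value_nonneg nn_integral_sum flip: sum_ennreal)
  also have "\<dots> \<le> 1"
    by (rule sum_nn_integral_first_passage_value_le)
  finally have "c * measure M B \<le> 1"
    using assms by (simp add: emeasure_eq_measure flip: ennreal_mult')
  then show ?thesis
    using assms unfolding B_def by (simp add: field_simps)
qed

lemma maximal_inequality:
  assumes "0 < c"
  shows "measure M {\<omega>\<in>space M. \<exists>n\<ge>1. c \<le> (\<Prod>i=1..n. y i (X i \<omega>))} \<le> 1 / c"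
proof -
  define B where "B N = {\<omega>\<in>space M. \<exists>n\<in>{1..N}. c \<le> (\<Prod>i=1..n. y i (X i \<omega>))}" for N
  have "B N \<in> sets M" for N
    unfolding B_def by measurable
  then have "range B \<subseteq> sets M"
    by auto
  moreover have "incseq B"
    unfolding B_def incseq_def by force
  ultimately have "(\<lambda>N. measure M (B N)) \<longlonglongrightarrow> measure M (\<Union>N. B N)"
    by (rule finite_Lim_measure_incseq)
  then have "measure M (\<Union>N. B N) \<le> 1 / c"
    using maximal_inequality_finite[OF assms] by (intro LIMSEQ_le_const2) (auto simp: B_def)
  moreover have "(\<Union>N. B N) = {\<omega>\<in>space M. \<exists>n\<ge>1. c \<le> (\<Prod>i=1..n. y i (X i \<omega>))}"
    unfolding B_def by auto (metis atLeastAtMost_iff order_refl)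
  ultimately show ?thesis
    by simp
qed

end

lemma maximal_inequality_exp_sum:
  fixes X :: "nat \<Rightarrow> 'a \<Rightarrow> real" and h :: "nat \<Rightarrow> real \<Rightarrow> real"
  assumes "prob_space M" and "prob_space.indep_vars M (\<lambda>_. borel) X {1..}"
    and "\<And>i. h i \<in> borel_measurable borel"
    and "\<And>i. 1 \<le> i \<Longrightarrow> (\<integral>\<^sup>+\<omega>. ennreal (exp (h i (X i \<omega>))) \<partial>M) = 1"
  shows "measure M {\<omega>\<in>space M. ereal t \<le> (SUP n\<in>{1..}. ereal (\<Sum>i=1..n. h i (X i \<omega>)))}
    \<le> exp (- t)"
proof -
  interpret product_martingale M X "\<lambda>i x. exp (h i x)"
  proof (intro product_martingale.intro product_martingale_axioms.intro)
    show "(\<lambda>x. exp (h i x)) \<in> borel_measurable borel" for i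
      using assms(3)[of i] by measurable
  qed (use assms in simp_all)
  define E where "E = {\<omega>\<in>space M. ereal t \<le> (SUP n\<in>{1..}. ereal (\<Sum>i=1..n. h i (X i \<omega>)))}"
  have "measure M E * exp t \<le> 1"
  proof (rule field_le_mult_one_interval)
    fix z :: real
    assume z: "0 < z" "z < 1"
    define F where "F = {\<omega>\<in>space M. \<exists>n\<ge>1. z * exp t \<le> (\<Prod>i=1..n. exp (h i (X i \<omega>)))}"
    have "E \<subseteq> F"
    proof
      fix \<omega> assume "\<omega> \<in> E"
      moreover have "ereal (ln (z * exp t)) < ereal t"
        using z by (simp add: ln_mult)
      ultimately have "ereal (ln (z * exp t)) < (SUP n\<in>{1..}. ereal (\<Sum>i=1..n. h i (X i \<omega>)))"
        unfolding E_def by (blast intro: less_le_trans)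
      then obtain n where n: "1 \<le> n" "ln (z * exp t) < (\<Sum>i=1..n. h i (X i \<omega>))"
        by (auto simp: less_SUP_iff)
      have "z * exp t = exp (ln (z * exp t))"
        using z by simp
      also have "\<dots> < (\<Prod>i=1..n. exp (h i (X i \<omega>)))"
        using n(2) by (simp flip: exp_sum)
      finally show "\<omega> \<in> F"
        using \<open>\<omega> \<in> E\<close> n(1) unfolding E_def F_def by auto
    qed
    moreover have "F \<in> sets M"
      unfolding F_def by measurable
    ultimately have "measure M E \<le> measure M F"
      by (rule finite_measure_mono)
    also have "\<dots> \<le> 1 / (z * exp t)"
      unfolding F_def using z by (intro maximal_inequality) simp
    finally have "measure M E \<le> 1 / (z * exp t)" .
    with z show "z * (measure M E * exp t) \<le> 1"
      by (simp add: field_simps)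
  qed
  then show ?thesis
    unfolding E_def by (simp add: exp_minus field_simps)
qed

theorem theorem17:
  fixes M :: "'a measure" and X :: "nat \<Rightarrow> 'a \<Rightarrow> real"
    and \<mu> \<nu> :: "nat \<Rightarrow> real" and m :: nat and \<theta> :: real
  assumes "prob_space M"
    and "prob_space.indep_vars M (\<lambda>_. borel) X {1..}"
    and "\<And>i. i \<ge> 1 \<Longrightarrow> \<nu> i > 0"
    and "\<And>i. i \<ge> 1 \<Longrightarrow>
           distributed M lborel (X i) (normal_density (\<mu> i) (sqrt (\<nu> i)))"
    and "m \<ge> 1"
  shows "let \<zeta> = (\<theta> - mean_bar \<mu> m) / mean_bar \<nu> m in
     measure M {\<omega> \<in> space M.
        (SUP n\<in>{1..}. ereal (\<zeta> * ((\<Sum>i=1..n. X i \<omega>) - real m * \<theta>)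
                                 - calV \<mu> \<nu> \<zeta> n + calV \<mu> \<nu> \<zeta> m)) \<ge> 0}
     \<le> (exp (- (\<bar>\<theta> - mean_bar \<mu> m\<bar>^2) / (2 * mean_bar \<nu> m))) ^ m"
proof -
  define \<zeta> where "\<zeta> = (\<theta> - mean_bar \<mu> m) / mean_bar \<nu> m"
  define h where "h i x = \<zeta> * x - \<zeta> * \<mu> i - \<zeta>\<^sup>2 * \<nu> i / 2" for i x
  define t where "t = \<zeta> * real m * \<theta> - calV \<mu> \<nu> \<zeta> m"
  have sum_h: "(\<Sum>i=1..n. h i (X i \<omega>)) = \<zeta> * (\<Sum>i=1..n. X i \<omega>) - calV \<mu> \<nu> \<zeta> n" for n \<omega>
    by (simp add: h_def calV_eq_sum sum_subtractf sum_distrib_left sum_divide_distrib)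
  have summand: "\<zeta> * ((\<Sum>i=1..n. X i \<omega>) - real m * \<theta>) - calV \<mu> \<nu> \<zeta> n + calV \<mu> \<nu> \<zeta> m
      = (\<Sum>i=1..n. h i (X i \<omega>)) - t" for n \<omega>
    unfolding sum_h t_def by (simp add: algebra_simps)
  have "(\<integral>\<^sup>+\<omega>. ennreal (exp (h i (X i \<omega>))) \<partial>M) = 1" if "1 \<le> i" for i
    unfolding h_def using assms(3,4) that by (intro nn_integral_exp_tilt_normal) auto
  then have bound: "measure M {\<omega>\<in>space M. ereal t \<le> (SUP n\<in>{1..}. ereal (\<Sum>i=1..n. h i (X i \<omega>)))}
      \<le> exp (- t)"
    using assms(1,2) by (intro maximal_inequality_exp_sum) (auto simp: h_def)
  have "0 < mean_bar \<nu> m"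
    using assms(3,5) by (intro mean_bar_pos) auto
  then have exp_t: "exp (- t) = (exp (- (\<bar>\<theta> - mean_bar \<mu> m\<bar>^2) / (2 * mean_bar \<nu> m))) ^ m"
    unfolding t_def \<zeta>_def calV_def
    by (simp add: field_simps power2_eq_square flip: exp_of_nat_mult)
  have nonempty: "{1..} \<noteq> ({} :: nat set)"
    by auto
  show ?thesis
    unfolding Let_def \<zeta>_def[symmetric] summand exp_t[symmetric] SUP_ereal_diff_nonneg_iff[OF nonempty]
    by (rule bound)
qed

end
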